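(* Let $n\ge2$, $1\le i<j\le n$, $\nu>0$, and let $X_{(1)}\le\dots\le X_{(n)}$ be the order statistics of $n$ i.i.d. random variables uniform on $[0,1]$. Then $$\mathbb{E}\big[X_{(i)}^\nu X_{(j)}^\nu\big]=\frac{\Gamma(n+1)\,\Gamma(\nu+1)\,\Gamma(\nu+i)}{\Gamma(i)\,\Gamma(n+1-j)}\sum_{k=0}^{\infty}(-1)^k\frac{\Gamma(n+k+1-j)}{\Gamma(k+1)\,\Gamma(\nu+1-k)\,\Gamma(\nu+n+k+1)},$$ where $1/\Gamma(\nu+1-k)$ is interpreted as $0$ whenever $\nu+1-k$ is a nonpositive integer.
   Context: $\Gamma$ denotes the Euler gamma function. The joint density of $(X_{(i)},X_{(j)})$ for $i<j$ is $\frac{\Gamma(n+1)}{\Gamma(i)\Gamma(j-i)\Gamma(n+1-j)}u^{i-1}(v-u)^{j-i-1}(1-v)^{n-j}$ on $0\le u\le v\le1$. *)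

theory Defs
  imports "HOL-Probability.Probability"
begin

definition order_stat :: "nat \<Rightarrow> (nat \<Rightarrow> 'a \<Rightarrow> real) \<Rightarrow> nat \<Rightarrow> 'a \<Rightarrow> real" where
  "order_stat n X r w = sort (map (\<lambda>k. X k w) [1..<n+1]) ! (r - 1)"

end

theory Submission
  imports Defs
begin

text \<open>Fix exponents \<open>a 0, \<dots>, a (n - 1) \<ge> 0\<close> and let \<open>I n t\<close> be the integral of
  \<open>\<Prod>r<n. X\<^sub>(\<^sub>r\<^sub>+\<^sub>1\<^sub>) powr a r\<close> over the event that all \<open>n\<close> uniform samples lie below \<open>t\<close>.
  Splitting this event according to which sample is the largest and integrating that sample
  last gives \<open>I n t = n * \<integral>\<^sub>0\<^sup>t y powr a (n - 1) * I (n - 1) y dy\<close>, hence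
  \<open>I n t = C n * t powr E n\<close> with \<open>E m = m + (\<Sum>r<m. a r)\<close> and \<open>C n = (\<Prod>m=1..n. m / E m)\<close>.
  For \<open>a (i - 1) = a (j - 1) = \<nu>\<close> and all other exponents zero this product telescopes to
  \<open>\<Gamma>(n+1) \<Gamma>(\<nu>+i) \<Gamma>(2\<nu>+j) / (\<Gamma>(i) \<Gamma>(\<nu>+j) \<Gamma>(n+1+2\<nu>))\<close>.
  On the other hand, expanding \<open>(1 - t) powr \<nu>\<close> by the binomial series inside
  \<open>B(n+1-j, 2\<nu>+j) = \<integral>\<^sub>0\<^sup>1 t\<^sup>n\<^sup>-\<^sup>j (1-t)\<^sup>2\<^sup>\<nu>\<^sup>+\<^sup>j\<^sup>-\<^sup>1 dt\<close> and integrating termwise (by dominated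
  convergence) shows that the series of the theorem sums to
  \<open>B(n+1-j, 2\<nu>+j) / (\<Gamma>(\<nu>+1) \<Gamma>(\<nu>+j))\<close>, which gives the same value.\<close>

section \<open>A binomial series for the Beta function\<close>

lemma gbinomial_Suc_ratio:
  fixes v :: "'a::field_char_0"
  shows "v gchoose (Suc k) = (v gchoose k) * (v - of_nat k) / of_nat (Suc k)"
  using gbinomial_mult_1[of v k] by (simp add: field_simps del: of_nat_Suc)

lemma gbinomial_bounded:
  fixes v :: real
  assumes "v \<ge> 0"
  obtains K where "\<And>k. \<bar>v gchoose k\<bar> \<le> K"
proof -
  define N where "N = nat \<lceil>v\<rceil>"
  define K where "K = Max ((\<lambda>k. \<bar>v gchoose k\<bar>) ` {..N})"
  have le: "\<bar>v gchoose k\<bar> \<le> K" if "k \<le> N" for k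
    unfolding K_def using that by (intro Max_ge) auto
  have "\<bar>v gchoose k\<bar> \<le> K" for k
  proof (cases "k \<le> N")
    case True
    then show ?thesis using le by auto
  next
    case False
    then have "N \<le> k" by auto
    then show ?thesis
    proof (induction k rule: dec_induct)
      case base
      then show ?case using le by auto
    next
      case (step k)
      have "real k \<ge> v" using step(1) unfolding N_def by linarith
      then have "\<bar>v - real k\<bar> / real (Suc k) \<le> 1" using assms by (simp add: field_simps)
      then have "\<bar>v gchoose Suc k\<bar> \<le> \<bar>v gchoose k\<bar> * 1"
        unfolding gbinomial_Suc_ratio abs_mult abs_divide
        by (metis abs_ge_zero abs_of_nat mult_left_mono times_divide_eq_right)
      then show ?case using step by simp
    qed
  qed
  then show ?thesis by (rule that)
qed

lemma powr_le_power_of_le_1: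
  fixes t e :: real
  assumes "0 \<le> t" "t \<le> 1" "real k \<le> e"
  shows "t powr e \<le> t ^ k"
proof (cases "t = 0")
  case True
  then show ?thesis by simp
next
  case False
  then have "t powr e \<le> t powr real k" using assms by (intro powr_mono') auto
  then show ?thesis using False assms by (simp add: powr_realpow)
qed

lemma Beta_binomial_series_sums:
  fixes v a b :: real
  assumes v: "v \<ge> 0" and a: "a \<ge> 1" and b: "b \<ge> 2"
  shows "(\<lambda>k. (v gchoose k) * (-1) ^ k * Beta (a + real k) b) sums Beta a (b + v)"
proof -
  obtain K where K: "\<And>k. \<bar>v gchoose k\<bar> \<le> K" using gbinomial_bounded[OF v] by blast
  define f where "f N t = (\<Sum>k<N. (v gchoose k) * (-1) ^ k * (t powr (a + real k - 1) * (1 - t) powr (b - 1)))"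
    for N t
  define g where "g t = t powr (a - 1) * (1 - t) powr (b + v - 1)" for t :: real
  have f_integral: "(f N has_integral (\<Sum>k<N. (v gchoose k) * (-1) ^ k * Beta (a + real k) b)) {0..1}" for N
    unfolding f_def using a b
    by (intro has_integral_sum has_integral_mult_right has_integral_Beta_real) auto
  have g_integral: "(g has_integral Beta a (b + v)) {0..1}"
    unfolding g_def using a b v by (intro has_integral_Beta_real) auto
  have f_bounded: "norm (f N t) \<le> K" if t: "t \<in> {0..1}" for N t
  proof (cases "t = 1")
    case True
    then show ?thesis using K[of 0] b by (simp add: f_def)
  next
    case False
    with t have t1: "0 \<le> t" "t < 1" by auto
    have "(1 - t) powr (b - 1) \<le> (1 - t) powr 1"
      using t1 b by (intro powr_mono') auto
    then have tail: "(1 - t) powr (b - 1) \<le> 1 - t" using t1 by simp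
    have "norm (f N t) \<le> (\<Sum>k<N. \<bar>v gchoose k\<bar> * (t powr (a + real k - 1) * (1 - t) powr (b - 1)))"
      unfolding f_def real_norm_def by (rule order_trans[OF sum_abs]) (simp add: abs_mult)
    also have "\<dots> \<le> (\<Sum>k<N. K * (t ^ k * (1 - t)))"
    proof (rule sum_mono)
      fix k
      have "t powr (a + real k - 1) * (1 - t) powr (b - 1) \<le> t ^ k * (1 - t)"
        using t1 a tail by (intro mult_mono powr_le_power_of_le_1) auto
      then show "\<bar>v gchoose k\<bar> * (t powr (a + real k - 1) * (1 - t) powr (b - 1)) \<le> K * (t ^ k * (1 - t))"
        using K[of k] t1 by (intro mult_mono[where c = "t powr (a + real k - 1) * (1 - t) powr (b - 1)"]) auto
    qed
    also have "\<dots> = K * (1 - t ^ N)"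
      using t1 by (simp add: sum_distrib_left[symmetric] sum_distrib_right[symmetric] sum_gp_strict)
    also have "\<dots> \<le> K" using K[of 0] t1 by (simp add: mult_left_le)
    finally show ?thesis .
  qed
  have f_tendsto: "(\<lambda>N. f N t) \<longlonglongrightarrow> g t" if t: "t \<in> {0..1}" for t
  proof -
    consider "t = 0" | "t = 1" | "0 < t" "t < 1" using t by fastforce
    then show ?thesis
    proof cases
      case 1
      then show ?thesis using a by (cases "a = 1") (simp_all add: f_def g_def)
    next
      case 2
      then show ?thesis using v b by (simp add: f_def g_def)
    next
      case 3
      have "(\<lambda>k. (v gchoose k) * (-t) ^ k) sums (1 + -t) powr v"
        by (rule gen_binomial_real) (use 3 in auto)
      then have "(\<lambda>N. (\<Sum>k<N. (v gchoose k) * (-t) ^ k) * (t powr (a - 1) * (1 - t) powr (b - 1)))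
           \<longlonglongrightarrow> (1 - t) powr v * (t powr (a - 1) * (1 - t) powr (b - 1))"
        by (intro tendsto_intros) (simp add: sums_def)
      moreover have "(\<Sum>k<N. (v gchoose k) * (-t) ^ k) * (t powr (a - 1) * (1 - t) powr (b - 1)) = f N t" for N
        unfolding f_def sum_distrib_right
      proof (intro sum.cong refl)
        fix k
        have "t powr (a + real k - 1) = t powr (a - 1) * t ^ k"
          using 3 by (simp add: powr_add[symmetric] powr_realpow[symmetric] algebra_simps)
        then show "(v gchoose k) * (-t) ^ k * (t powr (a - 1) * (1 - t) powr (b - 1))
          = (v gchoose k) * (-1) ^ k * (t powr (a + real k - 1) * (1 - t) powr (b - 1))"
          by (simp add: power_minus')
      qed
      moreover have "(1 - t) powr v * (t powr (a - 1) * (1 - t) powr (b - 1)) = g t"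
        using 3 by (simp add: g_def powr_add[symmetric] algebra_simps)
      ultimately show ?thesis by simp
    qed
  qed
  have "(\<lambda>N. integral {0..1} (f N)) \<longlonglongrightarrow> integral {0..1} g"
    by (rule dominated_convergence(2)[where h = "\<lambda>_. K"])
       (use f_integral f_bounded f_tendsto in \<open>auto simp: integrable_on_def\<close>)
  then show ?thesis
    unfolding sums_def integral_unique[OF f_integral] integral_unique[OF g_integral] .
qed

section \<open>Sorted values and their measurability\<close>

lemma nth_insort:
  fixes ys :: "real list"
  assumes "sorted ys" "r \<le> length ys"
  shows "insort a ys ! r = (if r < length ys \<and> ys ! r < a then ys ! r
           else if r = 0 \<or> ys ! (r - 1) < a then a else ys ! (r - 1))"
  using assms
proof (induction ys arbitrary: r)
  case Nil
  then show ?case by simp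
next
  case (Cons y ys r)
  show ?case
  proof (cases "a \<le> y")
    case True
    have a_le: "\<forall>q<length ys. a \<le> ys ! q" using Cons.prems True
      by (auto intro: order.trans[OF True] dest: nth_mem)
    show ?thesis
    proof (cases r)
      case 0
      then show ?thesis using True by simp
    next
      case (Suc r')
      have a_not_gt: "\<And>q. ys ! q < a \<Longrightarrow> q < length ys \<Longrightarrow> False" using a_le by force
      show ?thesis using Suc a_le True Cons.prems
        by (cases r') (auto simp: not_less elim: a_not_gt)
    qed
  next
    case False
    show ?thesis
    proof (cases r)
      case 0
      then show ?thesis using False by simp
    next
      case (Suc r')
      have "insort a ys ! r' = (if r' < length ys \<and> ys ! r' < a then ys ! r'
           else if r' = 0 \<or> ys ! (r' - 1) < a then a else ys ! (r' - 1))"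
        using Cons Suc by auto
      then show ?thesis using False Suc by (cases r') auto
    qed
  qed
qed

text \<open>By \<open>nth_insort\<close>, every entry of the sorted list is a finite case distinction over
  measurable comparisons of the entries.\<close>

lemma borel_measurable_sort_nth:
  fixes F :: "'k \<Rightarrow> 'b \<Rightarrow> real"
  assumes "\<And>k. k \<in> set L \<Longrightarrow> F k \<in> borel_measurable M" "r < length L"
  shows "(\<lambda>w. sort (map (\<lambda>k. F k w) L) ! r) \<in> borel_measurable M"
  using assms
proof (induction L arbitrary: r)
  case Nil
  then show ?case by simp
next
  case (Cons k0 L r)
  define S where "S w = sort (map (\<lambda>k. F k w) L)" for w
  have [measurable]: "F k0 \<in> borel_measurable M" using Cons by auto
  have S_nth: "(\<lambda>w. S w ! q) \<in> borel_measurable M" if "q < length L" for q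
    unfolding S_def using Cons that by auto
  have eq: "sort (map (\<lambda>k. F k w) (k0 # L)) ! r = (if r < length L \<and> S w ! r < F k0 w then S w ! r
           else if r = 0 \<or> S w ! (r - 1) < F k0 w then F k0 w else S w ! (r - 1))" for w
    unfolding S_def using Cons.prems by (simp add: nth_insort)
  consider "r = 0" "L = []" | "r = 0" "L \<noteq> []" | "0 < r" "r < length L" | "0 < r" "r = length L"
    using Cons.prems by fastforce
  then show ?case
  proof cases
    case 1
    then show ?thesis unfolding eq by simp
  next
    case 2
    have [measurable]: "(\<lambda>w. S w ! 0) \<in> borel_measurable M" using S_nth 2 by auto
    have "(\<lambda>w. sort (map (\<lambda>k. F k w) (k0 # L)) ! r) = (\<lambda>w. if S w ! 0 < F k0 w then S w ! 0 else F k0 w)"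
      using 2 unfolding eq by auto
    then show ?thesis by simp
  next
    case 3
    note [measurable] = S_nth[of r] S_nth[of "r - 1"]
    show ?thesis unfolding eq using 3 by simp
  next
    case 4
    have [measurable]: "(\<lambda>w. S w ! (r - 1)) \<in> borel_measurable M" using S_nth 4 by auto
    have "(\<lambda>w. sort (map (\<lambda>k. F k w) (k0 # L)) ! r)
        = (\<lambda>w. if S w ! (r - 1) < F k0 w then F k0 w else S w ! (r - 1))"
      using 4 unfolding eq by auto
    moreover have "(\<lambda>w. if S w ! (r - 1) < F k0 w then F k0 w else S w ! (r - 1)) \<in> borel_measurable M"
      by measurable
    ultimately show ?thesis by simp
  qed
qed

section \<open>Moments of order statistics of uniform samples\<close>

abbreviation uniform01 :: "real measure" where
  "uniform01 \<equiv> uniform_measure lborel {0..1}"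

definition sorted_values :: "'i::linorder set \<Rightarrow> ('i \<Rightarrow> real) \<Rightarrow> real list" where
  "sorted_values J x = sort (map x (sorted_list_of_set J))"

text \<open>The power \<open>y\<^sup>c\<close> with \<open>0\<^sup>0 = 1\<close>; note that \<open>0 powr 0 = 0\<close>.\<close>

definition rpow :: "real \<Rightarrow> real \<Rightarrow> real" where
  "rpow y c = (if c = 0 then 1 else y powr c)"

definition order_monomial :: "(nat \<Rightarrow> real) \<Rightarrow> 'i::linorder set \<Rightarrow> ('i \<Rightarrow> real) \<Rightarrow> real" where
  "order_monomial a J x = (\<Prod>r<card J. rpow (sorted_values J x ! r) (a r))"

text \<open>The strict bounds for the indices in \<open>S\<close> appear when the largest sample is split off:
  samples with a smaller index than the first maximiser lie strictly below it.\<close>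

definition all_below :: "'i set \<Rightarrow> 'i set \<Rightarrow> real \<Rightarrow> ('i \<Rightarrow> real) \<Rightarrow> bool" where
  "all_below J S t x \<longleftrightarrow> (\<forall>k\<in>J. x k \<le> t \<and> (k \<in> S \<longrightarrow> x k < t))"

definition first_argmax :: "'i::linorder set \<Rightarrow> 'i \<Rightarrow> ('i \<Rightarrow> real) \<Rightarrow> bool" where
  "first_argmax J m x \<longleftrightarrow> (\<forall>k\<in>J. x k \<le> x m \<and> (k < m \<longrightarrow> x k < x m))"

definition moment_degree :: "(nat \<Rightarrow> real) \<Rightarrow> nat \<Rightarrow> real" where
  "moment_degree a n = real n + (\<Sum>r<n. a r)"

fun moment_const :: "(nat \<Rightarrow> real) \<Rightarrow> nat \<Rightarrow> real" where
  "moment_const a 0 = 1"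
| "moment_const a (Suc n) = real (Suc n) / moment_degree a (Suc n) * moment_const a n"

lemma prob_space_uniform01: "prob_space uniform01"
  by (rule prob_space_uniform_measure) auto

lemma rpow_nonneg: "0 \<le> rpow y c"
  unfolding rpow_def by auto

lemma order_monomial_nonneg: "0 \<le> order_monomial a J x"
  unfolding order_monomial_def by (intro prod_nonneg) (auto simp: rpow_nonneg)

lemma moment_degree_nonneg: "(\<And>r. 0 \<le> a r) \<Longrightarrow> 0 \<le> moment_degree a n"
  unfolding moment_degree_def by (intro add_nonneg_nonneg sum_nonneg) auto

lemma moment_degree_Suc: "moment_degree a (Suc n) = moment_degree a n + a n + 1"
  unfolding moment_degree_def by simp

lemma moment_const_nonneg: "(\<And>r. 0 \<le> a r) \<Longrightarrow> 0 \<le> moment_const a n"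
  by (induction n) (auto intro!: mult_nonneg_nonneg divide_nonneg_nonneg moment_degree_nonneg)

lemma measurable_component_uniform01:
  assumes "k \<in> J"
  shows "(\<lambda>x. x k) \<in> borel_measurable (PiM J (\<lambda>_. uniform01))"
  using measurable_component_singleton[OF assms, of "\<lambda>_. uniform01"]
  by (simp add: measurable_cong_sets[OF refl sets_uniform_measure])

lemma borel_measurable_order_monomial:
  assumes "finite J"
  shows "order_monomial a J \<in> borel_measurable (PiM J (\<lambda>_. uniform01))"
proof -
  have "(\<lambda>x. sorted_values J x ! r) \<in> borel_measurable (PiM J (\<lambda>_. uniform01))" if "r < card J" for r
    unfolding sorted_values_def using assms that
    by (intro borel_measurable_sort_nth[where F = "\<lambda>k x. x k"] measurable_component_uniform01) auto
  moreover have "(\<lambda>y. rpow y c) \<in> borel_measurable borel" for c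
    unfolding rpow_def by measurable
  ultimately show ?thesis
    unfolding order_monomial_def[abs_def]
    by (intro borel_measurable_prod) (auto intro: measurable_compose)
qed

lemma pred_all_below:
  assumes "finite J"
  shows "Measurable.pred (PiM J (\<lambda>_. uniform01)) (all_below J S t)"
  unfolding all_below_def
proof (intro pred_intros_finite assms)
  fix k assume "k \<in> J"
  note [measurable] = measurable_component_uniform01[OF this]
  show "Measurable.pred (PiM J (\<lambda>_. uniform01)) (\<lambda>x. x k \<le> t \<and> (k \<in> S \<longrightarrow> x k < t))"
    by measurable
qed

lemma pred_first_argmax:
  assumes "finite J" "m \<in> J"
  shows "Measurable.pred (PiM J (\<lambda>_. uniform01)) (first_argmax J m)"
  unfolding first_argmax_def
proof (intro pred_intros_finite assms(1))
  fix k assume "k \<in> J"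
  note xk = measurable_component_uniform01[OF this] and xm = measurable_component_uniform01[OF assms(2)]
  have "Measurable.pred (PiM J (\<lambda>_. uniform01)) (\<lambda>x. x k \<le> x m)"
    unfolding Measurable.pred_def by (rule borel_measurable_le[OF xk xm])
  moreover have "Measurable.pred (PiM J (\<lambda>_. uniform01)) (\<lambda>x. x k < x m)"
    by (rule borel_measurable_pred_less[OF xk xm])
  ultimately show "Measurable.pred (PiM J (\<lambda>_. uniform01)) (\<lambda>x. x k \<le> x m \<and> (k < m \<longrightarrow> x k < x m))"
    by (intro pred_intros_logic measurable_const) auto
qed

lemma borel_measurable_order_monomial_on:
  assumes "finite J" "Measurable.pred (PiM J (\<lambda>_. uniform01)) P"
  shows "(\<lambda>x. if P x then ennreal (order_monomial a J x) else 0) \<in> borel_measurable (PiM J (\<lambda>_. uniform01))"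
  using assms borel_measurable_order_monomial[OF assms(1)] by measurable

lemma length_sorted_values [simp]: "finite J \<Longrightarrow> length (sorted_values J x) = card J"
  by (simp add: sorted_values_def)

lemma sorted_values_cong:
  "finite J \<Longrightarrow> (\<And>k. k \<in> J \<Longrightarrow> x k = x' k) \<Longrightarrow> sorted_values J x = sorted_values J x'"
  unfolding sorted_values_def by (intro arg_cong[where f = sort] map_cong) auto

lemma sorted_values_insert_max:
  assumes "finite J" "m \<notin> J" "\<forall>k\<in>J. x k \<le> x m"
  shows "sorted_values (insert m J) x = sorted_values J x @ [x m]"
  unfolding sorted_values_def
proof (rule properties_for_sort)
  have "mset (sorted_list_of_set A) = mset_set A" if "finite A" for A :: "'a::linorder set"
    using that by (metis mset_sorted_list_of_multiset sorted_list_of_mset_set)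
  then show "mset (sort (map x (sorted_list_of_set J)) @ [x m]) = mset (map x (sorted_list_of_set (insert m J)))"
    using assms by simp
  show "sorted (sort (map x (sorted_list_of_set J)) @ [x m])"
    using assms by (auto simp: sorted_append)
qed

lemma order_monomial_insert_max:
  assumes "finite J" "m \<notin> J" "\<forall>k\<in>J. x k \<le> y"
  shows "order_monomial a (insert m J) (x(m := y)) = order_monomial a J x * rpow y (a (card J))"
proof -
  have "sorted_values (insert m J) (x(m := y)) = sorted_values J (x(m := y)) @ [y]"
    using sorted_values_insert_max[OF assms(1,2), of "x(m := y)"] assms(3) by simp
  also have "sorted_values J (x(m := y)) = sorted_values J x"
    using assms by (intro sorted_values_cong) auto
  finally have "sorted_values (insert m J) (x(m := y)) = sorted_values J x @ [y]" .
  then show ?thesis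
    unfolding order_monomial_def using assms by (simp add: nth_append)
qed

lemma ex1_first_argmax:
  assumes "finite J" "J \<noteq> {}"
  shows "\<exists>!m. m \<in> J \<and> first_argmax J m x"
proof -
  define Mx where "Mx = Max (x ` J)"
  define m where "m = Min {k\<in>J. x k = Mx}"
  have "Mx \<in> x ` J" unfolding Mx_def using assms by (intro Max_in) auto
  then have ne: "{k\<in>J. x k = Mx} \<noteq> {}" by auto
  have fin: "finite {k\<in>J. x k = Mx}" using assms by auto
  have m: "m \<in> J" "x m = Mx" using Min_in[OF fin ne] unfolding m_def by auto
  have le: "x k \<le> Mx" if "k \<in> J" for k unfolding Mx_def using assms that by auto
  have "x k \<noteq> Mx" if "k \<in> J" "k < m" for k
    using Min_le[OF fin, of k] that unfolding m_def by auto
  then have "first_argmax J m x"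
    unfolding first_argmax_def using le m by fastforce
  moreover have "m' = m" if "m' \<in> J" "first_argmax J m' x" for m'
    using \<open>first_argmax J m x\<close> that m(1) unfolding first_argmax_def
    by (metis linorder_neqE not_le)
  ultimately show ?thesis using m by blast
qed

lemma sum_first_argmax:
  assumes "finite J" "J \<noteq> {}"
  shows "(\<Sum>m\<in>J. if first_argmax J m x \<and> P then c else 0) = (if P then c else (0::'a::comm_monoid_add))"
proof -
  obtain m0 where m0: "m0 \<in> J" "\<And>m. m \<in> J \<Longrightarrow> first_argmax J m x \<longleftrightarrow> m = m0"
    using ex1_first_argmax[OF assms, of x] by blast
  have "(\<Sum>m\<in>J. if first_argmax J m x \<and> P then c else 0) = (\<Sum>m\<in>J. if m = m0 then (if P then c else 0) else 0)"
    using m0(2) by (intro sum.cong) auto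
  also have "\<dots> = (if P then c else 0)"
    using m0(1) assms(1) by simp
  finally show ?thesis .
qed

lemma AE_uniform01: "AE y in uniform01. 0 < y \<and> y \<le> 1 \<and> y \<noteq> t"
proof -
  have "AE y in lborel. y \<in> {0..1::real} \<longrightarrow> 0 < y \<and> y \<le> 1 \<and> y \<noteq> t"
    using AE_lborel_singleton[of "0::real"] AE_lborel_singleton[of t]
    by eventually_elim auto
  then show ?thesis by (subst AE_uniform_measure) auto
qed

lemma nn_integral_uniform01_powr:
  fixes t e K :: real
  assumes "0 < t" "t \<le> 1" "0 \<le> e" "0 \<le> K"
  shows "(\<integral>\<^sup>+y. ennreal (indicator {0..t} y * (K * y powr e)) \<partial>uniform01) = ennreal (K * (t powr (e + 1) / (e + 1)))"
proof -
  have "((\<lambda>y. K * y powr e) has_integral K * (t powr (e + 1) / (e + 1))) {0..t}"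
    using assms by (intro has_integral_mult_right has_integral_powr_from_0) auto
  from nn_integral_has_integral_lebesgue[OF _ this]
  have "(\<integral>\<^sup>+y. ennreal (indicator {0..t} y * (K * y powr e)) \<partial>lborel) = ennreal (K * (t powr (e + 1) / (e + 1)))"
    using assms by (simp add: ennreal_mult' mult.assoc)
  moreover have "ennreal (indicator {0..t} y * (K * y powr e)) * indicator {0..1} y = ennreal (indicator {0..t} y * (K * y powr e))"
    for y :: real
    using assms(2) by (auto simp: indicator_def)
  ultimately show ?thesis
    by (simp add: nn_integral_uniform_measure divide_ennreal_def)
qed

lemma first_argmax_all_below_insert_iff:
  assumes "m \<notin> J" "y < t"
  shows "first_argmax (insert m J) m (x(m := y)) \<and> all_below (insert m J) S t (x(m := y))
    \<longleftrightarrow> all_below J {k. k < m} y x"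
proof -
  have "k \<in> J \<Longrightarrow> k \<noteq> m" for k using assms by auto
  then show ?thesis using assms unfolding first_argmax_def all_below_def by force
qed

lemma nn_integral_first_argmax_slice:
  assumes J: "finite J" "m \<notin> J" and y: "0 < y" "y < t"
  shows "(\<integral>\<^sup>+x. (if first_argmax (insert m J) m (x(m := y)) \<and> all_below (insert m J) S t (x(m := y))
             then ennreal (order_monomial a (insert m J) (x(m := y))) else 0) \<partial>PiM J (\<lambda>_. uniform01))
    = (\<integral>\<^sup>+x. (if all_below J {k. k < m} y x then ennreal (order_monomial a J x) else 0) \<partial>PiM J (\<lambda>_. uniform01))
      * ennreal (y powr a (card J))"
proof -
  have "(if first_argmax (insert m J) m (x(m := y)) \<and> all_below (insert m J) S t (x(m := y))
           then ennreal (order_monomial a (insert m J) (x(m := y))) else 0)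
      = (if all_below J {k. k < m} y x then ennreal (order_monomial a J x) else 0) * ennreal (y powr a (card J))"
    for x
  proof (cases "all_below J {k. k < m} y x")
    case True
    then have "\<forall>k\<in>J. x k \<le> y" unfolding all_below_def by auto
    from order_monomial_insert_max[OF J this]
    have "order_monomial a (insert m J) (x(m := y)) = order_monomial a J x * y powr a (card J)"
      using y by (simp add: rpow_def)
    then show ?thesis
      using True first_argmax_all_below_insert_iff[OF J(2) y(2)]
      by (simp add: ennreal_mult order_monomial_nonneg)
  next
    case False
    then show ?thesis using first_argmax_all_below_insert_iff[OF J(2) y(2)] by auto
  qed
  then show ?thesis
    by (simp add: nn_integral_multc borel_measurable_order_monomial_on[OF J(1) pred_all_below[OF J(1)]])
qed

lemma nn_integral_order_monomial_first_argmax: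
  assumes J: "finite J" "m \<notin> J" and t: "0 < t" "t \<le> 1"
    and nonneg: "0 \<le> C" "0 \<le> D" "0 \<le> a (card J)"
    and below: "\<And>y. 0 < y \<Longrightarrow> y \<le> 1 \<Longrightarrow>
      (\<integral>\<^sup>+x. (if all_below J {k. k < m} y x then ennreal (order_monomial a J x) else 0) \<partial>PiM J (\<lambda>_. uniform01))
        = ennreal (C * y powr D)"
  shows "(\<integral>\<^sup>+x. (if first_argmax (insert m J) m x \<and> all_below (insert m J) S t x
             then ennreal (order_monomial a (insert m J) x) else 0) \<partial>PiM (insert m J) (\<lambda>_. uniform01))
    = ennreal (C * (t powr (D + a (card J) + 1) / (D + a (card J) + 1)))"
proof -
  interpret product_sigma_finite "\<lambda>_. uniform01"
    by (simp add: product_sigma_finite_def prob_space_imp_sigma_finite prob_space_uniform01)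
  define h where "h x = (if first_argmax (insert m J) m x \<and> all_below (insert m J) S t x
      then ennreal (order_monomial a (insert m J) x) else 0)" for x
  have "h \<in> borel_measurable (PiM (insert m J) (\<lambda>_. uniform01))"
    unfolding h_def using J(1)
    by (intro borel_measurable_order_monomial_on pred_intros_logic pred_first_argmax pred_all_below) auto
  then have "(\<integral>\<^sup>+x. h x \<partial>PiM (insert m J) (\<lambda>_. uniform01))
      = (\<integral>\<^sup>+y. (\<integral>\<^sup>+x. h (x(m := y)) \<partial>PiM J (\<lambda>_. uniform01)) \<partial>uniform01)"
    by (rule product_nn_integral_insert_rev[OF J])
  also have "\<dots> = (\<integral>\<^sup>+y. ennreal (indicator {0..t} y * (C * y powr (D + a (card J)))) \<partial>uniform01)"
  proof (rule nn_integral_cong_AE)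
    show "AE y in uniform01. (\<integral>\<^sup>+x. h (x(m := y)) \<partial>PiM J (\<lambda>_. uniform01))
        = ennreal (indicator {0..t} y * (C * y powr (D + a (card J))))"
      using AE_uniform01[of t]
    proof eventually_elim
      fix y assume y: "0 < y \<and> y \<le> 1 \<and> y \<noteq> t"
      show "(\<integral>\<^sup>+x. h (x(m := y)) \<partial>PiM J (\<lambda>_. uniform01))
          = ennreal (indicator {0..t} y * (C * y powr (D + a (card J))))"
      proof (cases "y < t")
        case True
        then have "(\<integral>\<^sup>+x. h (x(m := y)) \<partial>PiM J (\<lambda>_. uniform01))
            = ennreal (C * y powr D) * ennreal (y powr a (card J))"
          unfolding h_def using y by (simp add: nn_integral_first_argmax_slice[OF J] below)
        also have "\<dots> = ennreal (indicator {0..t} y * (C * y powr (D + a (card J))))"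
          using True y nonneg by (simp add: ennreal_mult[symmetric] powr_add)
        finally show ?thesis .
      next
        case False
        then have "h (x(m := y)) = 0" for x
          using y unfolding h_def all_below_def by auto
        then show ?thesis using False y by (simp add: indicator_def)
      qed
    qed
  qed
  also have "\<dots> = ennreal (C * (t powr (D + a (card J) + 1) / (D + a (card J) + 1)))"
    using t nonneg by (intro nn_integral_uniform01_powr) auto
  finally show ?thesis unfolding h_def .
qed

lemma nn_integral_order_monomial_all_below:
  assumes "finite J" "\<And>r. 0 \<le> a r" "0 < t" "t \<le> 1"
  shows "(\<integral>\<^sup>+x. (if all_below J S t x then ennreal (order_monomial a J x) else 0) \<partial>PiM J (\<lambda>_. uniform01))
       = ennreal (moment_const a (card J) * t powr moment_degree a (card J))"
  using assms
proof (induction "card J" arbitrary: J S t)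
  case 0
  then have "J = {}" by auto
  then show ?case using "0.prems" by (simp add: PiM_empty all_below_def order_monomial_def moment_degree_def)
next
  case (Suc n)
  let ?D = "moment_degree a n + a n + 1"
  have J: "finite J" "J \<noteq> {}" using Suc by auto
  have "(\<integral>\<^sup>+x. (if all_below J S t x then ennreal (order_monomial a J x) else 0) \<partial>PiM J (\<lambda>_. uniform01))
      = (\<integral>\<^sup>+x. (\<Sum>m\<in>J. if first_argmax J m x \<and> all_below J S t x then ennreal (order_monomial a J x) else 0)
          \<partial>PiM J (\<lambda>_. uniform01))"
    by (simp only: sum_first_argmax[OF J])
  also have "\<dots> = (\<Sum>m\<in>J. \<integral>\<^sup>+x. (if first_argmax J m x \<and> all_below J S t x
      then ennreal (order_monomial a J x) else 0) \<partial>PiM J (\<lambda>_. uniform01))"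
    using J(1)
    by (intro nn_integral_sum borel_measurable_order_monomial_on pred_intros_logic pred_first_argmax pred_all_below)
      auto
  also have "\<dots> = (\<Sum>m\<in>J. ennreal (moment_const a n * (t powr ?D / ?D)))"
  proof (rule sum.cong[OF refl])
    fix m assume "m \<in> J"
    then have J_eq: "J = insert m (J - {m})" and card: "card (J - {m}) = n"
      using Suc.hyps(2) J(1) by auto
    show "(\<integral>\<^sup>+x. (if first_argmax J m x \<and> all_below J S t x then ennreal (order_monomial a J x) else 0)
        \<partial>PiM J (\<lambda>_. uniform01)) = ennreal (moment_const a n * (t powr ?D / ?D))"
      using Suc.prems Suc.hyps(1)[OF card[symmetric]] J(1)
      by (subst (1 2 3 4) J_eq, subst nn_integral_order_monomial_first_argmax)
        (auto simp: card moment_const_nonneg moment_degree_nonneg)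
  qed
  also have "\<dots> = ennreal (real (Suc n) * (moment_const a n * (t powr ?D / ?D)))"
    unfolding sum_constant using Suc.hyps(2)
    by (subst ennreal_mult') (auto simp: ennreal_of_nat_eq_real_of_nat)
  also have "real (Suc n) * (moment_const a n * (t powr ?D / ?D))
      = moment_const a (Suc n) * t powr moment_degree a (Suc n)"
  proof -
    have "0 < ?D" using moment_degree_nonneg[of a n, OF Suc.prems(2)] Suc.prems(2)[of n] by linarith
    then show ?thesis by (simp add: moment_degree_Suc field_simps)
  qed
  finally show ?case using Suc.hyps(2) by simp
qed

lemma integral_order_monomial_uniform01:
  assumes "finite J" "\<And>r. 0 \<le> a r"
  shows "integral\<^sup>L (PiM J (\<lambda>_. uniform01)) (order_monomial a J) = moment_const a (card J)"
proof -
  have "AE x in PiM J (\<lambda>_. uniform01). all_below J {} 1 x"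
    unfolding all_below_def
  proof (rule eventually_ball_finite[OF assms(1)], intro ballI)
    fix k assume "k \<in> J"
    have "AE y in uniform01. y \<le> 1" using AE_uniform01[of 1] by eventually_elim auto
    then show "AE x in PiM J (\<lambda>_. uniform01). x k \<le> 1 \<and> (k \<in> {} \<longrightarrow> x k < 1)"
      using AE_PiM_component[of J "\<lambda>_. uniform01" k "\<lambda>y. y \<le> 1"] prob_space_uniform01 \<open>k \<in> J\<close>
      by auto
  qed
  then have "(\<integral>\<^sup>+x. ennreal (order_monomial a J x) \<partial>PiM J (\<lambda>_. uniform01))
      = (\<integral>\<^sup>+x. (if all_below J {} 1 x then ennreal (order_monomial a J x) else 0) \<partial>PiM J (\<lambda>_. uniform01))"
    by (intro nn_integral_cong_AE) auto
  also have "\<dots> = ennreal (moment_const a (card J))"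
    using nn_integral_order_monomial_all_below[OF assms(1,2), of 1] by simp
  finally show ?thesis
    using borel_measurable_order_monomial[OF assms(1)] moment_const_nonneg[OF assms(2)]
    by (simp add: integral_eq_nn_integral order_monomial_nonneg)
qed

lemma (in prob_space) expectation_order_monomial_iid_uniform01:
  fixes X :: "'i::linorder \<Rightarrow> 'a \<Rightarrow> real"
  assumes J: "finite J" and indep: "indep_vars (\<lambda>_. borel) X J"
    and uniform: "\<And>k. k \<in> J \<Longrightarrow> distr M borel (X k) = uniform01" and a: "\<And>r. 0 \<le> a r"
  shows "expectation (\<lambda>w. order_monomial a J (\<lambda>k. X k w)) = moment_const a (card J)"
proof (cases "J = {}")
  case True
  then show ?thesis by (simp add: order_monomial_def prob_space)
next
  case False
  define Y where "Y w = (\<lambda>k\<in>J. X k w)" for w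
  have rv: "X k \<in> borel_measurable M" if "k \<in> J" for k
    using indep that unfolding indep_vars_def2 by auto
  have Y: "Y \<in> measurable M (PiM J (\<lambda>_. borel))"
    unfolding Y_def by (intro measurable_restrict rv)
  have "distr M (PiM J (\<lambda>_. borel)) Y = PiM J (\<lambda>k. distr M borel (X k))"
    using indep indep_vars_iff_distr_eq_PiM'[OF False, where M' = "\<lambda>_. borel" and X = X] rv
    unfolding Y_def by blast
  also have "\<dots> = PiM J (\<lambda>_. uniform01)"
    by (rule PiM_cong) (simp_all add: uniform)
  finally have distr_Y: "distr M (PiM J (\<lambda>_. borel)) Y = PiM J (\<lambda>_. uniform01)" .
  have sets_eq: "sets (PiM J (\<lambda>_. uniform01)) = sets (PiM J (\<lambda>_. borel))"
    by (intro sets_PiM_cong) auto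
  have monomial: "order_monomial a J \<in> borel_measurable (PiM J (\<lambda>_. borel))"
    using borel_measurable_order_monomial[OF J] unfolding measurable_cong_sets[OF sets_eq refl] .
  have "sorted_values J (\<lambda>k. X k w) = sorted_values J (Y w)" for w
    using J by (intro sorted_values_cong) (auto simp: Y_def)
  then have "expectation (\<lambda>w. order_monomial a J (\<lambda>k. X k w)) = expectation (\<lambda>w. order_monomial a J (Y w))"
    unfolding order_monomial_def by simp
  also have "\<dots> = integral\<^sup>L (distr M (PiM J (\<lambda>_. borel)) Y) (order_monomial a J)"
    by (rule integral_distr[OF Y monomial, symmetric])
  finally show ?thesis
    unfolding distr_Y integral_order_monomial_uniform01[OF J a] .
qed

section \<open>The product of two order statistics\<close>

lemma Gamma_plus1_pos: "(x::real) > 0 \<Longrightarrow> Gamma (x + 1) = x * Gamma x"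
  by (rule Gamma_plus1) (auto dest: nonpos_Ints_nonpos)

locale two_order_stats =
  fixes i j :: nat and \<nu> :: real
  assumes i_pos: "1 \<le> i" and i_less_j: "i < j" and \<nu>_pos: "\<nu> > 0"
begin

definition exps :: "nat \<Rightarrow> real" where
  "exps r = (if r = i - 1 \<or> r = j - 1 then \<nu> else 0)"

lemma exps_nonneg: "0 \<le> exps r"
  unfolding exps_def using \<nu>_pos by auto

lemma sum_exps: "(\<Sum>r<k. exps r) = (if i \<le> k then \<nu> else 0) + (if j \<le> k then \<nu> else 0)"
  by (induction k) (use i_pos i_less_j in \<open>auto simp: exps_def\<close>)

lemma moment_const_exps_before: "k < i \<Longrightarrow> moment_const exps k = 1"
proof (induction k)
  case (Suc k)
  then show ?case using i_less_j unfolding moment_const.simps moment_degree_def sum_exps by simp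
qed simp

lemma moment_const_exps_middle:
  "i - 1 \<le> k \<Longrightarrow> k < j \<Longrightarrow>
    moment_const exps k = Gamma (real k + 1) * Gamma (\<nu> + real i) / (Gamma (real i) * Gamma (real k + 1 + \<nu>))"
proof (induction k rule: dec_induct)
  case base
  have "real (i - 1) + 1 = real i" using i_pos by simp
  moreover have "Gamma (real i) \<noteq> 0" "Gamma (\<nu> + real i) \<noteq> 0"
    using \<nu>_pos i_pos by (auto intro!: less_imp_neq[symmetric])
  ultimately show ?case using moment_const_exps_before[of "i - 1"] i_pos by (simp add: add.commute)
next
  case (step k)
  have "moment_degree exps (Suc k) = real k + 1 + \<nu>"
    using step i_pos unfolding moment_degree_def sum_exps by auto
  moreover have "Gamma (real (Suc k) + 1) = (real k + 1) * Gamma (real k + 1)"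
    using Gamma_plus1_pos[of "real k + 1"] by simp
  moreover have "Gamma (real (Suc k) + 1 + \<nu>) = (real k + 1 + \<nu>) * Gamma (real k + 1 + \<nu>)"
    using Gamma_plus1_pos[of "real k + 1 + \<nu>"] \<nu>_pos by (simp add: add_ac)
  moreover have "Gamma (real i) > 0" "Gamma (real k + 1 + \<nu>) > 0" "real k + 1 + \<nu> > 0"
    using \<nu>_pos i_pos by auto
  ultimately show ?case using step by (simp add: field_simps)
qed

lemma moment_const_exps:
  "j - 1 \<le> k \<Longrightarrow> moment_const exps k = Gamma (real k + 1) * Gamma (\<nu> + real i) * Gamma (2 * \<nu> + real j)
     / (Gamma (real i) * Gamma (\<nu> + real j) * Gamma (real k + 1 + 2 * \<nu>))"
proof (induction k rule: dec_induct)
  case base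
  have "real (j - 1) + 1 = real j" using i_less_j by simp
  moreover have "Gamma (2 * \<nu> + real j) \<noteq> 0" "Gamma (\<nu> + real j) \<noteq> 0" "Gamma (real i) \<noteq> 0"
    "Gamma (real j + \<nu> * 2) \<noteq> 0" "Gamma (real j) \<noteq> 0" "Gamma (\<nu> + real i) \<noteq> 0"
    using \<nu>_pos i_pos i_less_j by (auto intro!: less_imp_neq[symmetric])
  ultimately show ?case using moment_const_exps_middle[of "j - 1"] i_pos i_less_j
    by (simp add: field_simps add_ac)
next
  case (step k)
  have "moment_degree exps (Suc k) = real k + 1 + 2 * \<nu>"
    using step i_pos i_less_j unfolding moment_degree_def sum_exps by auto
  moreover have "Gamma (real (Suc k) + 1) = (real k + 1) * Gamma (real k + 1)"
    using Gamma_plus1_pos[of "real k + 1"] by simp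
  moreover have "Gamma (real (Suc k) + 1 + 2 * \<nu>) = (real k + 1 + 2 * \<nu>) * Gamma (real k + 1 + 2 * \<nu>)"
    using Gamma_plus1_pos[of "real k + 1 + 2 * \<nu>"] \<nu>_pos by (simp add: add_ac)
  moreover have "Gamma (real i) > 0" "Gamma (real k + 1 + 2 * \<nu>) > 0" "real k + 1 + 2 * \<nu> > 0"
    "Gamma (\<nu> + real j) > 0"
    using \<nu>_pos i_pos by auto
  ultimately show ?case using step by (simp add: field_simps)
qed

lemma order_stat_powr_eq_order_monomial:
  assumes "j \<le> n"
  shows "order_stat n X i w powr \<nu> * order_stat n X j w powr \<nu> = order_monomial exps {1..n} (\<lambda>k. X k w)"
proof -
  let ?ys = "sorted_values {1..n} (\<lambda>k. X k w)"
  have ys: "?ys = sort (map (\<lambda>k. X k w) [1..<n+1])"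
    unfolding sorted_values_def by (simp add: atLeastLessThanSuc_atLeastAtMost[symmetric])
  have sub: "{i - 1, j - 1} \<subseteq> {..<n}" using assms i_pos i_less_j by auto
  have "order_monomial exps {1..n} (\<lambda>k. X k w) = (\<Prod>r\<in>{i - 1, j - 1}. rpow (?ys ! r) (exps r))"
    unfolding order_monomial_def card_atLeastAtMost diff_Suc_1
    by (rule prod.mono_neutral_right[OF _ sub]) (auto simp: exps_def rpow_def)
  also have "\<dots> = ?ys ! (i - 1) powr \<nu> * ?ys ! (j - 1) powr \<nu>"
    using i_pos i_less_j \<nu>_pos by (simp add: exps_def rpow_def)
  finally show ?thesis unfolding order_stat_def ys ..
qed

end

section \<open>Summing the series\<close>

lemma order_stat_series_term:
  fixes v :: real
  assumes v: "v > 0" and "j \<le> n"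
  shows "(-1) ^ k * Gamma (real n + real k + 1 - real j)
      / (Gamma (real k + 1) * Gamma (v + real n + real k + 1)) * rGamma (v + 1 - real k)
    = rGamma (v + 1) / Gamma (v + real j)
      * ((v gchoose k) * (-1) ^ k * Beta (real (n + 1 - j) + real k) (v + real j))"
proof -
  have m: "real n + real k + 1 - real j = real (n + 1 - j) + real k" using assms by simp
  have "Gamma (real k + 1) = fact k"
    using Gamma_fact[of k, where 'a = real] by (simp add: add.commute)
  moreover have "rGamma (v + 1 - real k) = pochhammer (v + 1 - real k) k * rGamma (v + 1)"
    using pochhammer_rGamma[of "v + 1 - real k" k] by simp
  moreover have "v gchoose k = pochhammer (v + 1 - real k) k / fact k"
    by (simp add: gbinomial_pochhammer' diff_add_eq)
  moreover have "Beta (real (n + 1 - j) + real k) (v + real j)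
      = Gamma (real (n + 1 - j) + real k) * Gamma (v + real j) / Gamma (v + real n + real k + 1)"
    unfolding Beta_def using assms by (simp add: algebra_simps)
  moreover have "Gamma (v + real j) \<noteq> 0" "Gamma (v + real n + real k + 1) \<noteq> 0" "(fact k :: real) \<noteq> 0"
    using v by (auto intro!: less_imp_neq[symmetric])
  ultimately show ?thesis unfolding m by (simp add: field_simps)
qed

lemma order_stat_series_sums:
  fixes v :: real
  assumes "v > 0" "2 \<le> j" "j \<le> n"
  shows "(\<lambda>k. (-1) ^ k * Gamma (real n + real k + 1 - real j)
      / (Gamma (real k + 1) * Gamma (v + real n + real k + 1)) * rGamma (v + 1 - real k))
    sums (rGamma (v + 1) / Gamma (v + real j) * Beta (real (n + 1 - j)) (2 * v + real j))"
proof -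
  have "(\<lambda>k. (v gchoose k) * (-1) ^ k * Beta (real (n + 1 - j) + real k) (v + real j))
      sums Beta (real (n + 1 - j)) (v + real j + v)"
    using assms by (intro Beta_binomial_series_sums) auto
  then show ?thesis
    unfolding order_stat_series_term[OF assms(1,3)]
    by (intro sums_mult) (simp add: algebra_simps)
qed

context two_order_stats
begin

lemma order_stat_series_value:
  assumes "j \<le> n"
  shows "Gamma (real n + 1) * Gamma (\<nu> + 1) * Gamma (\<nu> + real i) / (Gamma (real i) * Gamma (real n + 1 - real j))
      * (rGamma (\<nu> + 1) / Gamma (\<nu> + real j) * Beta (real (n + 1 - j)) (2 * \<nu> + real j))
    = moment_const exps n"
proof -
  have m: "real (n + 1 - j) = real n + 1 - real j" using assms by simp
  have "rGamma (\<nu> + 1) * Gamma (\<nu> + 1) = 1"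
    using \<nu>_pos by (simp add: rGamma_inverse_Gamma field_simps less_imp_neq[symmetric])
  moreover have "Gamma (real n + 1 - real j) \<noteq> 0" "Gamma (real i) \<noteq> 0" "Gamma (\<nu> + real j) \<noteq> 0"
    "Gamma (real n + 1 + 2 * \<nu>) \<noteq> 0" "Gamma (\<nu> + 1) \<noteq> 0"
    using assms i_pos \<nu>_pos by (auto intro!: less_imp_neq[symmetric])
  ultimately show ?thesis
    unfolding moment_const_exps[OF order.trans[OF diff_le_self assms]] Beta_def m
    by (simp add: field_simps add_ac)
qed

end

theorem mainTheorem4:
  fixes M :: "'a measure" and X :: "nat \<Rightarrow> 'a \<Rightarrow> real"
    and n i j :: nat and \<nu> :: real
  assumes "prob_space M"
    and "n \<ge> 2" and "1 \<le> i" and "i < j" and "j \<le> n" and "\<nu> > 0"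
    and "prob_space.indep_vars M (\<lambda>_. borel) X {1..n}"
    and "\<And>k. k \<in> {1..n} \<Longrightarrow> distr M borel (X k) = uniform_measure lborel {0..1}"
  shows "summable (\<lambda>k::nat. (-1) ^ k * Gamma (real n + real k + 1 - real j)
              / (Gamma (real k + 1) * Gamma (\<nu> + real n + real k + 1)) * rGamma (\<nu> + 1 - real k))
     \<and> integral\<^sup>L M (\<lambda>w. order_stat n X i w powr \<nu> * order_stat n X j w powr \<nu>)
       = Gamma (real n + 1) * Gamma (\<nu> + 1) * Gamma (\<nu> + real i)
           / (Gamma (real i) * Gamma (real n + 1 - real j))
         * (\<Sum>k. (-1) ^ k * Gamma (real n + real k + 1 - real j)
              / (Gamma (real k + 1) * Gamma (\<nu> + real n + real k + 1)) * rGamma (\<nu> + 1 - real k))"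
proof -
  interpret prob_space M by fact
  interpret two_order_stats i j \<nu> using assms by unfold_locales auto
  have "integral\<^sup>L M (\<lambda>w. order_stat n X i w powr \<nu> * order_stat n X j w powr \<nu>)
      = expectation (\<lambda>w. order_monomial exps {1..n} (\<lambda>k. X k w))"
    unfolding order_stat_powr_eq_order_monomial[OF assms(5)] ..
  also have "\<dots> = moment_const exps n"
    using assms(7,8) exps_nonneg by (subst expectation_order_monomial_iid_uniform01) auto
  finally show ?thesis
    using order_stat_series_sums[of \<nu> j n] order_stat_series_value[OF assms(5)] assms(3-6)
    by (auto simp: sums_iff)
qed

end
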